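(* Let $K$ and $K'$ be two non-degenerate CMIs, with $\mathrm{can}(\mathrm{pur}(K))=(C,\langle\mathbb I_K,\mathbb I_K,P_i,1\le i\le t\rangle)$. Let $K''=R_K^{K'}$ and $\mathrm{can}(\mathrm{pur}(K''))=(C'',\langle\mathbb I_{K''},\mathbb I_{K''},P''_j,1\le j\le r\rangle)$. If $K$ implies $K'$ and $R_K^{K'}\ne(\cdot,\langle\ \rangle)$, then for any $m_1\in P''_{j_1}$ and $m_2\in P''_{j_2}$ with $1\le j_1,j_2\le r$, $j_1\ne j_2$, we have $m_1\in P_{i_1}$ and $m_2\in P_{i_2}$ for some $1\le i_1,i_2\le t$ with $i_1\ne i_2$.
   Context: Setting: $X_1,\dots,X_n$ jointly distributed discrete random variables with $H(X_i)<\infty$; distribution unspecified. $X_\alpha=(X_i,i\in\alpha)$, $X_\emptyset$ constant. A CMI is $K=(C,\langle Q_1,\dots,Q_k\rangle)$, $k\ge0$, $C\subseteq\{1,\dots,n\}$, $\langle\cdot\rangle$ an unordered multiset of subsets; valid (for a given distribution) if $\sum_iH(X_{Q_i}|X_C)-H(X_{Q_1},\dots,X_{Q_k}|X_C)=0$. Empty members may be deleted. Degenerate = valid for every distribution, written $(\cdot,\langle\ \rangle)$. "$K$ implies $K'$": for every joint distribution, if $K$ is valid then $K'$ is valid. $\mathrm{pur}(K)=(C,\langle Q_i\setminus C:Q_i\setminus C\ne\emptyset\rangle)$. For pure $K$: $\mathbb I_K$ = indices lying in at least two members of the collection if $k\ge2$, else $\emptyset$; $P_1,\dots,P_t$ the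 nonempty sets among $Q_i\setminus\mathbb I_K$; $\mathrm{can}(K)=(\cdot,\langle\ \rangle)$ if $k\le1$, $(C,\langle\mathbb I_K,\mathbb I_K\rangle)$ if $k\ge2,\mathbb I_K\ne\emptyset,t\le1$, $(C,\langle P_1..P_t\rangle)$ if $k\ge2,\mathbb I_K=\emptyset$, $(C,\langle\mathbb I_K,\mathbb I_K,P_1..P_t\rangle)$ if $k\ge2,\mathbb I_K\ne\emptyset,t\ge2$. For general $K$, $\mathbb I_K$ is the repeated-index set of $\mathrm{pur}(K)$; general-form notation omits the copies of $\mathbb I_K$ when empty and uses $t=0$ for $(C,\langle\mathbb I_K,\mathbb I_K\rangle)$. $R_K^{K'}$: with $\mathrm{can}(\mathrm{pur}(K'))=(C',\langle\mathbb I_{K'},\mathbb I_{K'},P'_j,1\le j\le s\rangle)$, $D=\mathbb I_{K'}\setminus\mathbb I_K$ and $T_1,\dots,T_u$ the nonempty sets among $P'_j\setminus\mathbb I_K$: $R_K^{K'}=(\cdot,\langle\ \rangle)$ if $D=\emptyset,u\le1$; $(C'\setminus\mathbb I_K,\langle T_1..T_u\rangle)$ if $D=\emptyset,u\ge2$; $(C'\setminus\mathbb I_K,\langle D,D\rangle)$ if $D\ne\emptyset,u\le1$; $(C'\setminus\mathbb I_K,\langle D,D,T_1..T_u\rangle)$ if $D\ne\emptyset,u\ge2$. *)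

theory Defs
  imports "HOL-Probability.Probability"
begin

text \<open>Joint distributions of X_1..X_n: a discrete (countable support) distribution of
  outcomes omega :: nat => nat, where X_i = omega i (values encoded in a countable set).\<close>

type_synonym cmi = "nat set \<times> nat set multiset"

definition marg :: "(nat \<Rightarrow> nat) pmf \<Rightarrow> nat set \<Rightarrow> (nat \<Rightarrow> nat) pmf" where
  "marg p \<alpha> = map_pmf (\<lambda>\<omega> i. if i \<in> \<alpha> then \<omega> i else 0) p"

definition ent_term :: "'a pmf \<Rightarrow> 'a \<Rightarrow> real" where
  "ent_term q x = - pmf q x * log 2 (pmf q x)"

definition ent :: "'a pmf \<Rightarrow> real" where
  "ent q = infsum (ent_term q) UNIV"

definition Hent :: "(nat \<Rightarrow> nat) pmf \<Rightarrow> nat set \<Rightarrow> real" where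
  "Hent p \<alpha> = ent (marg p \<alpha>)"

definition condH :: "(nat \<Rightarrow> nat) pmf \<Rightarrow> nat set \<Rightarrow> nat set \<Rightarrow> real" where
  "condH p A C = Hent p (A \<union> C) - Hent p C"

text \<open>admissible joint distribution: every H(X_i), 1 <= i <= n, finite\<close>
definition dist_ok :: "nat \<Rightarrow> (nat \<Rightarrow> nat) pmf \<Rightarrow> bool" where
  "dist_ok n p = (\<forall>i\<in>{1..n}. ent_term (marg p {i}) summable_on UNIV)"

definition wf_cmi :: "nat \<Rightarrow> cmi \<Rightarrow> bool" where
  "wf_cmi n K = (fst K \<subseteq> {1..n} \<and> (\<forall>Q\<in>#snd K. Q \<subseteq> {1..n}))"

definition valid :: "(nat \<Rightarrow> nat) pmf \<Rightarrow> cmi \<Rightarrow> bool" where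
  "valid p K = ((\<Sum>Q\<in>#snd K. condH p Q (fst K)) - condH p (\<Union>(set_mset (snd K))) (fst K) = 0)"

definition degenerate :: "nat \<Rightarrow> cmi \<Rightarrow> bool" where
  "degenerate n K = (\<forall>p. dist_ok n p \<longrightarrow> valid p K)"

definition cmi_implies :: "nat \<Rightarrow> cmi \<Rightarrow> cmi \<Rightarrow> bool" where
  "cmi_implies n K K' = (\<forall>p. dist_ok n p \<longrightarrow> valid p K \<longrightarrow> valid p K')"

definition pur :: "cmi \<Rightarrow> cmi" where
  "pur K = (fst K, filter_mset (\<lambda>S. S \<noteq> {}) (image_mset (\<lambda>Q. Q - fst K) (snd K)))"

definition rep_idx :: "nat set multiset \<Rightarrow> nat set" where
  "rep_idx Qs = (if 2 \<le> size Qs then {i. 2 \<le> size (filter_mset (\<lambda>Q. i \<in> Q) Qs)} else {})"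

definition IK :: "cmi \<Rightarrow> nat set" where
  "IK K = rep_idx (snd (pur K))"

definition dup :: "nat set \<Rightarrow> nat set multiset" where
  "dup I = (if I = {} then {#} else {#I, I#})"

text \<open>canonical form of a pure CMI; None stands for the degenerate symbol (.,< >)\<close>
definition can :: "cmi \<Rightarrow> cmi option" where
  "can K = (let C = fst K; Qs = snd K; I = rep_idx Qs;
              Ps = filter_mset (\<lambda>S. S \<noteq> {}) (image_mset (\<lambda>Q. Q - I) Qs) in
     if size Qs \<le> 1 then None
     else if I \<noteq> {} \<and> size Ps \<le> 1 then Some (C, {#I, I#})
     else if I = {} then Some (C, Ps)
     else Some (C, {#I, I#} + Ps))"

text \<open>R_K^K'; None stands for (.,< >)\<close>
definition R :: "cmi \<Rightarrow> cmi \<Rightarrow> cmi option" where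
  "R K K' = (case can (pur K') of None \<Rightarrow> None
     | Some (C', Q') \<Rightarrow>
        (let I = IK K; D = IK K' - I;
             Ts = filter_mset (\<lambda>S. S \<noteq> {}) (image_mset (\<lambda>P. P - I) (Q' - dup (IK K'))) in
         if D = {} \<and> size Ts \<le> 1 then None
         else if D = {} then Some (C' - I, Ts)
         else if size Ts \<le> 1 then Some (C' - I, {#D, D#})
         else Some (C' - I, {#D, D#} + Ts)))"

end

theory Submission imports Defs begin

(* Let M = {m1, m2}. Tracing m1 and m2 back through the canonical forms and R shows that they
   lie in two different members of K', outside its conditioning set. Hence K' fails for the
   distribution in which a fair bit is copied into the coordinates of M and all other
   coordinates are 0: there H(X_Q | X_C) is 1 if Q meets M and C does not, and 0 otherwise.
   Since K implies K', K fails too, so at least two members of K meet M while C does not.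
   As m1, m2 are not repeated indices of K (R removes I_K), they lie in two different
   members P_i of the canonical form of K. *)

abbreviation strip :: "'a set \<Rightarrow> 'a set multiset \<Rightarrow> 'a set multiset" where
  "strip S A \<equiv> filter_mset (\<lambda>X. X \<noteq> {}) (image_mset (\<lambda>Q. Q - S) A)"

definition occurrences :: "'a set multiset \<Rightarrow> 'a \<Rightarrow> nat" where
  "occurrences A i = size (filter_mset (\<lambda>Q. i \<in> Q) A)"

definition hits :: "'a set multiset \<Rightarrow> 'a set \<Rightarrow> nat" where
  "hits A M = size (filter_mset (\<lambda>Q. Q \<inter> M \<noteq> {}) A)"

definition separated :: "'a set multiset \<Rightarrow> 'a \<Rightarrow> 'a \<Rightarrow> bool" where
  "separated A a b \<longleftrightarrow> (\<exists>Q1 Q2. Q1 \<in># A \<and> Q2 \<in># A - {#Q1#} \<and> a \<in> Q1 \<and> b \<in> Q2)"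

lemma rep_idx_eq_occurrences: "rep_idx A = {i. 2 \<le> occurrences A i}"
proof (cases "2 \<le> size A")
  case True
  then show ?thesis by (simp add: rep_idx_def occurrences_def)
next
  case False
  have "occurrences A i \<le> size A" for i
    unfolding occurrences_def by (rule size_filter_mset_lesseq)
  then show ?thesis using False by (auto simp: rep_idx_def) (meson le_trans not_le)
qed

lemma occurrences_strip: "a \<notin> S \<Longrightarrow> occurrences (strip S A) a = occurrences A a"
  by (induction A) (auto simp: occurrences_def)

lemma hits_strip: "S \<inter> M = {} \<Longrightarrow> hits (strip S A) M = hits A M"
  by (induction A) (auto simp: hits_def)

lemma hits_le_occurrences: "hits A {a, b} \<le> occurrences A a + occurrences A b"
  by (induction A) (auto simp: hits_def occurrences_def)

lemma sum_mset_hits: "(\<Sum>Q\<in>#A. if Q \<inter> M \<noteq> {} then 1 else 0::real) = real (hits A M)"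
  by (induction A) (auto simp: hits_def)

lemma Union_meets_iff_hits: "\<Union>(set_mset A) \<inter> M \<noteq> {} \<longleftrightarrow> 1 \<le> hits A M"
  by (induction A) (auto simp: hits_def)

lemma occurrences_pos_iff: "0 < occurrences A i \<longleftrightarrow> (\<exists>Q\<in>#A. i \<in> Q)"
  by (induction A) (auto simp: occurrences_def)

lemma separated_iff_add_mset:
  "separated A a b \<longleftrightarrow> (\<exists>Q1 Q2 B. A = add_mset Q1 (add_mset Q2 B) \<and> a \<in> Q1 \<and> b \<in> Q2)"
proof
  assume "separated A a b"
  then obtain Q1 Q2 where Q: "Q1 \<in># A" "Q2 \<in># A - {#Q1#}" "a \<in> Q1" "b \<in> Q2"
    unfolding separated_def by blast
  have "A = add_mset Q1 (add_mset Q2 (A - {#Q1#} - {#Q2#}))"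
    using Q(1,2) by (metis insert_DiffM)
  then show "\<exists>Q1 Q2 B. A = add_mset Q1 (add_mset Q2 B) \<and> a \<in> Q1 \<and> b \<in> Q2"
    using Q(3,4) by blast
next
  assume "\<exists>Q1 Q2 B. A = add_mset Q1 (add_mset Q2 B) \<and> a \<in> Q1 \<and> b \<in> Q2"
  then obtain Q1 Q2 B where "A = add_mset Q1 (add_mset Q2 B)" "a \<in> Q1" "b \<in> Q2"
    by blast
  then show "separated A a b"
    unfolding separated_def by (intro exI[of _ Q1] exI[of _ Q2]) auto
qed

lemma not_separated_empty [simp]: "\<not> separated {#} a b"
  by (simp add: separated_def)

lemma separated_size: "separated A a b \<Longrightarrow> 2 \<le> size A"
  by (auto simp: separated_iff_add_mset)

lemma separated_hits: "separated A a b \<Longrightarrow> 2 \<le> hits A {a, b}"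
  by (auto simp: separated_iff_add_mset hits_def)

lemma separated_if_hits:
  assumes "2 \<le> hits A {a, b}" "occurrences A a \<le> 1" "occurrences A b \<le> 1"
  shows "separated A a b"
proof -
  have "1 \<le> occurrences A a" using hits_le_occurrences[of A a b] assms by linarith
  then obtain Q1 where Q1: "Q1 \<in># A" "a \<in> Q1"
    using occurrences_pos_iff by (metis less_le_trans zero_less_one)
  define B where "B = A - {#Q1#}"
  have A: "A = add_mset Q1 B" using Q1 B_def by simp
  have "occurrences B a = 0" using assms(2) Q1 A by (simp add: occurrences_def)
  moreover have "hits A {a, b} = 1 + hits B {a, b}" using A Q1 by (simp add: hits_def)
  ultimately have "1 \<le> occurrences B b" using assms(1) hits_le_occurrences[of B a b] by linarith
  then obtain Q2 where "Q2 \<in># B" "b \<in> Q2"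
    using occurrences_pos_iff by (metis less_le_trans zero_less_one)
  then show ?thesis unfolding separated_def using Q1 B_def by blast
qed

lemma separated_strip_iff:
  "separated (strip S A) a b \<longleftrightarrow> separated A a b \<and> a \<notin> S \<and> b \<notin> S"
proof
  assume "separated (strip S A) a b"
  then obtain X1 X2 where X: "X1 \<in># strip S A" "X2 \<in># strip S A - {#X1#}" "a \<in> X1" "b \<in> X2"
    unfolding separated_def by blast
  obtain Q1 where Q1: "Q1 \<in># A" "X1 = Q1 - S" using X(1) by auto
  define B where "B = A - {#Q1#}"
  have A: "A = add_mset Q1 B" using Q1 B_def by simp
  have "strip S A - {#X1#} = strip S B" using X(3) Q1 A by auto
  then obtain Q2 where "Q2 \<in># B" "X2 = Q2 - S" using X(2) by auto
  then show "separated A a b \<and> a \<notin> S \<and> b \<notin> S"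
    unfolding separated_def using Q1 X B_def by auto
next
  assume "separated A a b \<and> a \<notin> S \<and> b \<notin> S"
  then obtain Q1 Q2 B where "A = add_mset Q1 (add_mset Q2 B)" "a \<in> Q1 - S" "b \<in> Q2 - S"
    by (auto simp: separated_iff_add_mset)
  then have "strip S A = add_mset (Q1 - S) (add_mset (Q2 - S) (strip S B))"
    "a \<in> Q1 - S" "b \<in> Q2 - S"
    by auto
  then show "separated (strip S A) a b"
    unfolding separated_iff_add_mset by blast
qed

lemma separated_dup_add:
  assumes "separated (dup D + A) a b"
    and "occurrences (dup D + A) a \<le> 1" "occurrences (dup D + A) b \<le> 1"
  shows "separated A a b"
proof -
  have "i \<notin> D" if "occurrences (dup D + A) i \<le> 1" for i
    using that by (cases "D = {}") (auto simp: dup_def occurrences_def)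
  then have outside: "a \<notin> Q \<and> b \<notin> Q" if "Q \<in># dup D" for Q
    using that assms(2,3) by (auto simp: dup_def split: if_splits)
  from assms(1) obtain Q1 Q2 where Q: "Q1 \<in># dup D + A" "Q2 \<in># dup D + A - {#Q1#}"
    "a \<in> Q1" "b \<in> Q2"
    unfolding separated_def by blast
  then have "Q1 \<in># A" using outside by auto
  then have "dup D + A - {#Q1#} = dup D + (A - {#Q1#})" by simp
  then have "Q2 \<in># A - {#Q1#}" using Q outside by auto
  then show ?thesis unfolding separated_def using \<open>Q1 \<in># A\<close> Q by blast
qed

lemma ent_term_eq_0: "x \<notin> set_pmf q \<Longrightarrow> ent_term q x = 0"
  by (simp add: ent_term_def set_pmf_iff)

lemma summable_on_ent_term: "finite (set_pmf q) \<Longrightarrow> ent_term q summable_on UNIV"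
  by (rule summable_on_cong_neutral[THEN iffD1, rotated -1, of _ "set_pmf q"])
    (auto simp: ent_term_eq_0)

lemma ent_finite_support: "finite (set_pmf q) \<Longrightarrow> ent q = (\<Sum>x\<in>set_pmf q. ent_term q x)"
proof -
  have "ent q = infsum (ent_term q) (set_pmf q)"
    unfolding ent_def by (rule infsum_cong_neutral) (auto simp: ent_term_eq_0)
  then show "finite (set_pmf q) \<Longrightarrow> ?thesis" by simp
qed

lemma ent_return_pmf: "ent (return_pmf c) = 0"
  by (subst ent_finite_support) (auto simp: ent_term_def)

lemma ent_pmf_of_set:
  assumes "finite S" "S \<noteq> {}"
  shows "ent (pmf_of_set S) = log 2 (card S)"
proof -
  have "ent (pmf_of_set S) = (\<Sum>x\<in>S. - (1 / card S) * log 2 (1 / card S))"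
    using assms by (subst ent_finite_support) (auto simp: ent_term_def)
  also have "\<dots> = log 2 (card S)"
    using assms by (simp add: card_gt_0_iff log_divide)
  finally show ?thesis .
qed

definition bit_vector :: "nat set \<Rightarrow> nat \<Rightarrow> nat \<Rightarrow> nat" where
  "bit_vector M b = (\<lambda>i. if i \<in> M then b else 0)"

definition copied_bit :: "nat set \<Rightarrow> (nat \<Rightarrow> nat) pmf" where
  "copied_bit M = pmf_of_set {bit_vector M 0, bit_vector M 1}"

lemma dist_ok_copied_bit: "dist_ok n (copied_bit M)"
  unfolding dist_ok_def by (auto intro!: summable_on_ent_term simp: marg_def copied_bit_def)

lemma Hent_copied_bit:
  assumes "M \<noteq> {}"
  shows "Hent (copied_bit M) \<alpha> = (if \<alpha> \<inter> M = {} then 0 else 1)"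
proof (cases "\<alpha> \<inter> M = {}")
  case True
  have "marg (copied_bit M) \<alpha> = map_pmf (\<lambda>_ _. 0) (copied_bit M)"
    unfolding marg_def copied_bit_def
    by (rule map_pmf_cong) (use True in \<open>auto simp: bit_vector_def fun_eq_iff\<close>)
  then show ?thesis using True by (simp add: Hent_def ent_return_pmf)
next
  case False
  define r where "r = (\<lambda>\<omega>::nat \<Rightarrow> nat. \<lambda>i. if i \<in> \<alpha> then \<omega> i else 0)"
  have distinct: "r (bit_vector M 0) \<noteq> r (bit_vector M 1)"
    using False by (auto simp: r_def bit_vector_def fun_eq_iff)
  then have "inj_on r {bit_vector M 0, bit_vector M 1}" by (auto simp: inj_on_def)
  then have "marg (copied_bit M) \<alpha> = pmf_of_set (r ` {bit_vector M 0, bit_vector M 1})"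
    unfolding marg_def copied_bit_def r_def[symmetric] by (rule map_pmf_of_set_inj) auto
  then show ?thesis using False distinct by (simp add: Hent_def ent_pmf_of_set)
qed

lemma condH_copied_bit:
  "M \<noteq> {} \<Longrightarrow> condH (copied_bit M) Q C = (if C \<inter> M = {} \<and> Q \<inter> M \<noteq> {} then 1 else 0)"
  by (auto simp: condH_def Hent_copied_bit Int_Un_distrib2)

lemma valid_copied_bit_iff:
  assumes "M \<noteq> {}"
  shows "valid (copied_bit M) K \<longleftrightarrow> fst K \<inter> M \<noteq> {} \<or> hits (snd K) M \<le> 1"
proof (cases "fst K \<inter> M = {}")
  case True
  have "(\<Sum>Q\<in>#snd K. condH (copied_bit M) Q (fst K)) = real (hits (snd K) M)"
    using assms True by (simp add: condH_copied_bit flip: sum_mset_hits)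
  then show ?thesis
    using True assms unfolding valid_def by (auto simp: condH_copied_bit Union_meets_iff_hits)
next
  case False
  then show ?thesis using assms unfolding valid_def by (simp add: condH_copied_bit)
qed

lemma can_SomeD:
  assumes "can K = Some (C, Q)"
  shows "C = fst K \<and>
    (Q = dup (rep_idx (snd K)) + strip (rep_idx (snd K)) (snd K) \<or>
     Q = dup (rep_idx (snd K)) \<and> size (strip (rep_idx (snd K)) (snd K)) \<le> 1)"
  using assms unfolding can_def Let_def dup_def by (auto split: if_splits)

lemma R_SomeD:
  assumes "R K K' = Some K''"
  obtains C' Q' where "can (pur K') = Some (C', Q')"
    and "snd K'' = dup (IK K' - IK K) + strip (IK K) (Q' - dup (IK K')) \<or>
      snd K'' = dup (IK K' - IK K)"
proof (cases "can (pur K')")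
  case None
  then show ?thesis using assms by (simp add: R_def)
next
  case (Some CQ)
  then show ?thesis
    using assms that unfolding R_def Let_def dup_def by (cases CQ) (auto split: if_splits)
qed

lemma can_pur_separatedD:
  assumes "can (pur K) = Some (C, Q)" "separated (Q - dup (IK K)) a b"
  shows "separated (snd K) a b \<and> a \<notin> fst K \<and> b \<notin> fst K \<and>
    occurrences (snd K) a \<le> 1 \<and> occurrences (snd K) b \<le> 1"
proof -
  let ?I = "IK K"
  have "Q - dup ?I = strip ?I (snd (pur K)) \<or> Q - dup ?I = {#}"
    using can_SomeD[OF assms(1)] by (auto simp: IK_def)
  then have "separated (strip ?I (snd (pur K))) a b" using assms(2) by auto
  then have pur: "separated (snd (pur K)) a b" "a \<notin> ?I" "b \<notin> ?I"
    by (simp_all add: separated_strip_iff)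
  then have "separated (snd K) a b" "a \<notin> fst K" "b \<notin> fst K"
    by (simp_all add: pur_def separated_strip_iff)
  moreover have "occurrences (snd K) i \<le> 1" if "i \<notin> ?I" "i \<notin> fst K" for i
    using that occurrences_strip[of i "fst K" "snd K"]
    by (simp add: IK_def pur_def rep_idx_eq_occurrences)
  ultimately show ?thesis using pur by blast
qed

lemma can_pur_separatedI:
  assumes "can (pur K) = Some (C, dup (IK K) + P)"
    and "fst K \<inter> {a, b} = {}" "a \<notin> IK K" "b \<notin> IK K" "2 \<le> hits (snd K) {a, b}"
  shows "separated P a b"
proof -
  let ?I = "IK K"
  have "2 \<le> hits (snd (pur K)) {a, b}" using assms(2,5) by (simp add: pur_def hits_strip)
  moreover have "occurrences (snd (pur K)) i \<le> 1" if "i \<notin> ?I" for i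
    using that by (simp add: IK_def rep_idx_eq_occurrences)
  ultimately have "separated (snd (pur K)) a b"
    using assms(3,4) by (simp add: separated_if_hits)
  then have sep: "separated (strip ?I (snd (pur K))) a b"
    using assms(3,4) by (simp add: separated_strip_iff)
  then have "P = strip ?I (snd (pur K))"
    using can_SomeD[OF assms(1)] separated_size[OF sep] by (auto simp: IK_def)
  with sep show ?thesis by simp
qed

lemma R_separatedD:
  assumes "R K K' = Some K''" "separated (snd K'') a b"
    and "occurrences (snd K'') a \<le> 1" "occurrences (snd K'') b \<le> 1"
  shows "separated (snd K') a b \<and> a \<notin> fst K' \<and> b \<notin> fst K' \<and> a \<notin> IK K \<and> b \<notin> IK K"
proof -
  obtain C' Q' where can': "can (pur K') = Some (C', Q')"
    and "snd K'' = dup (IK K' - IK K) + strip (IK K) (Q' - dup (IK K')) \<or>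
      snd K'' = dup (IK K' - IK K)"
    using R_SomeD[OF assms(1)] .
  then obtain X where X: "X \<in> {strip (IK K) (Q' - dup (IK K')), {#}}"
    and "snd K'' = dup (IK K' - IK K) + X"
    by fastforce
  then have "separated X a b" using assms(2-4) separated_dup_add by metis
  then have "separated (strip (IK K) (Q' - dup (IK K'))) a b" using X by auto
  then have "separated (Q' - dup (IK K')) a b" "a \<notin> IK K" "b \<notin> IK K"
    by (simp_all add: separated_strip_iff)
  then show ?thesis using can_pur_separatedD[OF can'] by blast
qed

theorem mainTheorem10:
  fixes n :: nat and K K' K'' :: cmi and C C'' :: "nat set"
    and PK PK'' :: "nat set multiset" and P1 P2 :: "nat set" and m1 m2 :: nat
  assumes "wf_cmi n K" and "wf_cmi n K'"
    and "\<not> degenerate n K" and "\<not> degenerate n K'"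
    and "can (pur K) = Some (C, dup (IK K) + PK)"
    and "R K K' = Some K''"
    and "can (pur K'') = Some (C'', dup (IK K'') + PK'')"
    and "cmi_implies n K K'"
    and "P1 \<in># PK''" and "P2 \<in># PK'' - {#P1#}"
    and "m1 \<in> P1" and "m2 \<in> P2"
  shows "\<exists>Q1 Q2. Q1 \<in># PK \<and> Q2 \<in># PK - {#Q1#} \<and> m1 \<in> Q1 \<and> m2 \<in> Q2"
proof -
  let ?M = "{m1, m2}"
  have "separated PK'' m1 m2" using assms(9-12) unfolding separated_def by blast
  then have "separated (snd K'') m1 m2"
    "occurrences (snd K'') m1 \<le> 1" "occurrences (snd K'') m2 \<le> 1"
    using can_pur_separatedD[OF assms(7)] by simp_all
  then have K': "separated (snd K') m1 m2" "fst K' \<inter> ?M = {}"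
    and not_IK: "m1 \<notin> IK K" "m2 \<notin> IK K"
    using R_separatedD[OF assms(6)] by auto
  then have "\<not> valid (copied_bit ?M) K'"
    using separated_hits[OF K'(1)] by (simp add: valid_copied_bit_iff)
  then have "\<not> valid (copied_bit ?M) K"
    using assms(8) dist_ok_copied_bit unfolding cmi_implies_def by blast
  then have "fst K \<inter> ?M = {}" "2 \<le> hits (snd K) ?M"
    by (simp_all add: valid_copied_bit_iff)
  then have "separated PK m1 m2" using can_pur_separatedI[OF assms(5)] not_IK by blast
  then show ?thesis unfolding separated_def .
qed

end
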